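(* Let $P_n(x;a,b,c,d|q)$ denote the monic Askey–Wilson polynomials. Then $$\Big(x-\tfrac{a^{-1}+a}{2}\Big)P_n(x;aq,b,c,d|q)=P_{n+1}(x;a,b,c,d|q)+k_n^{(a,b,c,d)}P_n(x;a,b,c,d|q),$$ $$\Big(x-\tfrac{b^{-1}+b}{2}\Big)P_n(x;a,bq,c,d|q)=P_{n+1}(x;a,b,c,d|q)+k_n^{(b,a,c,d)}P_n(x;a,b,c,d|q),$$ $$\Big(x-\tfrac{c^{-1}+c}{2}\Big)P_n(x;a,b,cq,d|q)=P_{n+1}(x;a,b,c,d|q)+k_n^{(c,b,a,d)}P_n(x;a,b,c,d|q),$$ $$\Big(x-\tfrac{d^{-1}+d}{2}\Big)P_n(x;a,b,c,dq|q)=P_{n+1}(x;a,b,c,d|q)+k_n^{(d,b,c,a)}P_n(x;a,b,c,d|q),$$ where $$k_n^{(a,b,c,d)}=-\frac{(1-abq^n)(1-acq^n)(1-adq^n)(1-abcdq^{n-1})}{2a(1-abcdq^{2n-1})(1-abcdq^{2n})}$$ and $k_n^{(e_1,e_2,e_3,e_4)}$ denotes this expression with $(a,b,c,d)$ replaced by $(e_1,e_2,e_3,e_4)$.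
   Context: With $(a;q)_0=1$, $(a;q)_k=\prod_{j=0}^{k-1}(1-aq^j)$, $(a_1,\dots,a_i;q)_k=\prod_j(a_j;q)_k$, and $x=\cos\theta$, the Askey–Wilson polynomials are $p_n(x;a,b,c,d|q)=a^{-n}(ab,ac,ad;q)_n\sum_{k=0}^{n}\frac{(q^{-n},abcdq^{n-1},ae^{i\theta},ae^{-i\theta};q)_k}{(ab,ac,ad,q;q)_k}q^k$, and the monic Askey–Wilson polynomials are $P_n(x;a,b,c,d|q)=\dfrac{p_n(x;a,b,c,d|q)}{2^n(abcdq^{n-1};q)_n}$. *)

theory Defs
  imports Complex_Main
begin

definition qpoch :: "complex \<Rightarrow> complex \<Rightarrow> nat \<Rightarrow> complex" where
  "qpoch a q k = (\<Prod>j<k. (1 - a * q ^ j))"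

text \<open>Askey-Wilson polynomial p_n(x;a,b,c,d|q), evaluated at x = cos theta.\<close>
definition aw_p :: "nat \<Rightarrow> complex \<Rightarrow> complex \<Rightarrow> complex \<Rightarrow> complex \<Rightarrow> complex \<Rightarrow> complex \<Rightarrow> complex" where
  "aw_p n a b c d q \<theta> =
     inverse (a ^ n) * qpoch (a*b) q n * qpoch (a*c) q n * qpoch (a*d) q n *
     (\<Sum>k=0..n.
        (qpoch (inverse (q ^ n)) q k * qpoch (a*b*c*d * q powi (int n - 1)) q k
         * qpoch (a * exp (\<i> * \<theta>)) q k * qpoch (a * exp (- \<i> * \<theta>)) q k)
        / (qpoch (a*b) q k * qpoch (a*c) q k * qpoch (a*d) q k * qpoch q q k) * q ^ k)"

definition aw_P :: "nat \<Rightarrow> complex \<Rightarrow> complex \<Rightarrow> complex \<Rightarrow> complex \<Rightarrow> complex \<Rightarrow> complex \<Rightarrow> complex" where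
  "aw_P n a b c d q \<theta> =
     aw_p n a b c d q \<theta> / (2 ^ n * qpoch (a*b*c*d * q powi (int n - 1)) q n)"

definition aw_k :: "nat \<Rightarrow> complex \<Rightarrow> complex \<Rightarrow> complex \<Rightarrow> complex \<Rightarrow> complex \<Rightarrow> complex" where
  "aw_k n a b c d q =
     - ((1 - a*b*q^n) * (1 - a*c*q^n) * (1 - a*d*q^n) * (1 - a*b*c*d * q powi (int n - 1)))
     / (2 * a * (1 - a*b*c*d * q powi (2 * int n - 1)) * (1 - a*b*c*d * q ^ (2*n)))"

end

theory Submission
  imports Defs "HOL-Analysis.Complex_Transcendental"
begin

text \<open>
  Write P_n as a sum of coefficients times the basis \<phi>_j(a) = (a e^{i\<theta>}, a e^{-i\<theta>}; q)_j.
  Since (1 - u e^{i\<theta>})(1 - u e^{-i\<theta>}) = 1 + u^2 - 2ux, multiplication by x - (a + a^{-1})/2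
  sends \<phi>_j(aq) to -\<phi>_{j+1}(a)/(2a), and multiplication by x sends \<phi>_j(a) into the span of
  \<phi>_j(a) and \<phi>_{j+1}(a). Both the a- and the b-identity thus reduce to relations between the
  coefficients of P_{n+1}, P_n and the shifted polynomial in this basis. Each of these coefficients
  is an explicit rational multiple of a single coefficient of the shifted polynomial, so every
  relation becomes a rational identity in q^n and q^j. The c- and d-identities follow from the
  b-identity because P_n is visibly symmetric in b, c, d.
\<close>

lemma power_int_pred: "q \<noteq> 0 \<Longrightarrow> q powi (int n - 1) = q ^ n / q"
  for q :: complex
  by (simp add: power_int_diff)

lemma power_int_double: "q powi (2 * int n) = q ^ n * q ^ n"
  for q :: complex
proof -
  have "2 * int n = int (n + n)" by simp
  then show ?thesis by (simp only: power_int_of_nat power_add)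
qed

lemma power_int_double_pred: "q \<noteq> 0 \<Longrightarrow> q powi (2 * int n - 1) = q ^ n * q ^ n / q"
  for q :: complex
  by (simp add: power_int_diff power_int_double)

lemma qpoch_0 [simp]: "qpoch x q 0 = 1"
  by (simp add: qpoch_def)

lemma qpoch_Suc: "qpoch x q (Suc k) = qpoch x q k * (1 - x * q ^ k)"
  by (simp add: qpoch_def)

lemma qpoch_Suc_shift: "qpoch x q (Suc k) = (1 - x) * qpoch (x * q) q k"
  unfolding qpoch_def prod.lessThan_Suc_shift by (simp add: mult_ac)

lemma qpoch_inverse_power_eq_0: "q \<noteq> 0 \<Longrightarrow> n < k \<Longrightarrow> qpoch (inverse (q ^ n)) q k = 0"
  unfolding qpoch_def by (rule prod_zero) (auto intro!: bexI[of _ n])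

lemma qpoch_inverse_power_Suc:
  "q \<noteq> 0 \<Longrightarrow> qpoch (inverse (q ^ Suc n)) q (Suc k) = (1 - inverse (q ^ Suc n)) * qpoch (inverse (q ^ n)) q k"
  for q :: complex
proof -
  assume "q \<noteq> 0"
  then have "inverse (q ^ Suc n) * q = inverse (q ^ n)" by simp
  then show ?thesis by (simp only: qpoch_Suc_shift)
qed

lemma qpoch_shift_eq:
  assumes "1 - x * q ^ m \<noteq> 0"
  shows "qpoch x q m = (1 - x) * qpoch (x * q) q m / (1 - x * q ^ m)"
  using qpoch_Suc[of x q m] qpoch_Suc_shift[of x q m] assms by (simp add: field_simps)

lemma qpoch_Suc_div_Suc:
  assumes "1 - x \<noteq> 0"
  shows "qpoch x q (Suc m) / qpoch x q (Suc k) = qpoch (x * q) q m / qpoch (x * q) q k"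
  using assms by (simp add: qpoch_Suc_shift)

lemma qpoch_div_Suc:
  assumes "1 - x \<noteq> 0" "1 - x * q ^ m \<noteq> 0"
  shows "qpoch x q m / qpoch x q (Suc k) = qpoch (x * q) q m / qpoch (x * q) q k / (1 - x * q ^ m)"
  using assms by (simp add: qpoch_shift_eq[of x q m] qpoch_Suc_shift[of x q k])

lemma qpoch_Suc_div:
  assumes "1 - x \<noteq> 0" "1 - x * q ^ m \<noteq> 0"
  shows "qpoch x q (Suc k) / qpoch x q m = qpoch (x * q) q k / qpoch (x * q) q m * (1 - x * q ^ m)"
  using assms by (simp add: qpoch_shift_eq[of x q m] qpoch_Suc_shift[of x q k])

definition aw_basis :: "complex \<Rightarrow> complex \<Rightarrow> complex \<Rightarrow> nat \<Rightarrow> complex" where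
  "aw_basis a q \<theta> j = qpoch (a * exp (\<i> * \<theta>)) q j * qpoch (a * exp (- \<i> * \<theta>)) q j"

lemma one_minus_exp_pair_product:
  "(1 - u * exp (\<i> * \<theta>)) * (1 - u * exp (- \<i> * \<theta>)) = 1 + u\<^sup>2 - 2 * u * cos \<theta>"
proof -
  have "exp (\<i> * \<theta>) * exp (- \<i> * \<theta>) = 1" by (simp flip: exp_add)
  then show ?thesis by (simp add: cos_exp_eq algebra_simps power2_eq_square)
qed

lemma aw_basis_Suc:
  "aw_basis a q \<theta> (Suc j) = aw_basis a q \<theta> j * (1 + (a * q ^ j)\<^sup>2 - 2 * (a * q ^ j) * cos \<theta>)"
  unfolding aw_basis_def qpoch_Suc one_minus_exp_pair_product[symmetric] by (simp add: mult_ac)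

lemma aw_basis_Suc_shift:
  "aw_basis a q \<theta> (Suc j) = (1 + a\<^sup>2 - 2 * a * cos \<theta>) * aw_basis (a * q) q \<theta> j"
  unfolding aw_basis_def qpoch_Suc_shift one_minus_exp_pair_product[symmetric] by (simp add: mult_ac)

lemma cos_mult_aw_basis:
  assumes "a \<noteq> 0" "q \<noteq> 0"
  shows "cos \<theta> * aw_basis a q \<theta> j
    = - aw_basis a q \<theta> (Suc j) / (2 * a * q ^ j) + (a * q ^ j + inverse (a * q ^ j)) / 2 * aw_basis a q \<theta> j"
  using assms unfolding aw_basis_Suc by (simp add: field_simps power2_eq_square)

lemma shifted_cos_mult_aw_basis:
  assumes "a \<noteq> 0"
  shows "(cos \<theta> - (inverse a + a) / 2) * aw_basis (a * q) q \<theta> j = - aw_basis a q \<theta> (Suc j) / (2 * a)"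
  using assms unfolding aw_basis_Suc_shift by (simp add: field_simps power2_eq_square)

text \<open>
  Written with quotients (x;q)_m/(x;q)_j so that shifting the degree, the index or a parameter
  acts on each quotient separately.
\<close>

definition aw_coeff :: "nat \<Rightarrow> complex \<Rightarrow> complex \<Rightarrow> complex \<Rightarrow> complex \<Rightarrow> complex \<Rightarrow> nat \<Rightarrow> complex" where
  "aw_coeff n a b c d q j = inverse (2 * a) ^ n * q ^ j
     * (qpoch (inverse (q ^ n)) q j / qpoch q q j)
     * (qpoch (a*b*c*d * q powi (int n - 1)) q j / qpoch (a*b*c*d * q powi (int n - 1)) q n)
     * (qpoch (a*b) q n / qpoch (a*b) q j) * (qpoch (a*c) q n / qpoch (a*c) q j)
     * (qpoch (a*d) q n / qpoch (a*d) q j)"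

lemma aw_P_expansion: "aw_P n a b c d q \<theta> = (\<Sum>j\<le>n. aw_coeff n a b c d q j * aw_basis a q \<theta> j)"
  unfolding aw_P_def aw_p_def atLeast0AtMost sum_distrib_left sum_divide_distrib
  by (rule sum.cong [OF refl], unfold aw_coeff_def aw_basis_def divide_inverse inverse_mult_distrib
      power_mult_distrib power_inverse) algebra

lemma aw_coeff_beyond_degree: "q \<noteq> 0 \<Longrightarrow> aw_coeff n a b c d q (Suc n) = 0"
  unfolding aw_coeff_def by (simp add: qpoch_inverse_power_eq_0)

lemma aw_coeff_Suc:
  "aw_coeff n a b c d q (Suc j) = aw_coeff n a b c d q j
     * (q * (1 - inverse (q ^ n) * q ^ j) * (1 - a*b*c*d * q powi (int n - 1) * q ^ j)
        / ((1 - q * q ^ j) * (1 - a*b * q ^ j) * (1 - a*c * q ^ j) * (1 - a*d * q ^ j)))"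
  unfolding aw_coeff_def qpoch_Suc divide_inverse inverse_mult_distrib power_Suc by algebra

lemma aw_P_Suc_add_mult:
  assumes "q \<noteq> 0"
  shows "aw_P (Suc n) a b c d q \<theta> + K * aw_P n a b c d q \<theta>
    = (aw_coeff (Suc n) a b c d q 0 + K * aw_coeff n a b c d q 0) * aw_basis a q \<theta> 0
      + (\<Sum>j\<le>n. (aw_coeff (Suc n) a b c d q (Suc j) + K * aw_coeff n a b c d q (Suc j))
                   * aw_basis a q \<theta> (Suc j))"
proof -
  have "aw_P n a b c d q \<theta> = (\<Sum>j\<le>Suc n. aw_coeff n a b c d q j * aw_basis a q \<theta> j)"
    using aw_coeff_beyond_degree[OF assms] by (simp add: aw_P_expansion)
  then show ?thesis
    unfolding aw_P_expansion[of "Suc n"] sum.atMost_Suc_shift[of _ n]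
    by (simp add: sum_distrib_left sum.distrib algebra_simps)
qed

lemma aw_k_eq:
  assumes "q \<noteq> 0"
  shows "aw_k n a b c d q = - ((1 - a*b*q^n) * (1 - a*c*q^n) * (1 - a*d*q^n) * (1 - a*b*c*d*q^n/q))
     / (2 * a * (1 - a*b*c*d*q^n*q^n/q) * (1 - a*b*c*d*q^n*q^n))"
  unfolding aw_k_def power_int_pred[OF assms] power_int_double_pred[OF assms]
    mult_2[of n] power_add
  by (simp only: times_divide_eq_right mult.assoc)

lemma aw_P_commute_bc: "aw_P n a b c d q \<theta> = aw_P n a c b d q \<theta>"
  unfolding aw_P_def aw_p_def by (simp add: mult_ac)

lemma aw_P_commute_bd: "aw_P n a b c d q \<theta> = aw_P n a d c b q \<theta>"
  unfolding aw_P_def aw_p_def by (simp add: mult_ac)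

lemma aw_k_commute_bc: "aw_k n a b c d q = aw_k n a c b d q"
  unfolding aw_k_def by (simp add: mult_ac)

lemma aw_k_commute_bd: "aw_k n a b c d q = aw_k n a d c b q"
  unfolding aw_k_def by (simp add: mult_ac)

text \<open>
  Cancels a nonzero factor in goals that are otherwise closed by AC-rewriting, which treats
  inverse x as an atom.
\<close>

lemma eq_via_inverse_factor: "x \<noteq> 0 \<Longrightarrow> x * inverse x * y = z \<Longrightarrow> y = z"
  for x y z :: "'a :: field"
  by simp

lemma scaled_sum_eq: "x + k * y = u \<Longrightarrow> f * x + k * (f * y) = f * u"
  for x y k u f :: "'a :: comm_ring"
  by (metis distrib_left mult.left_commute)

text \<open>
  In the next three identities Q and r stand for q^n and q^j. The summands are the ratios of
  coefficients established in the locale below, so each identity is a coefficient relation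
  divided by one coefficient of the shifted polynomial.
\<close>

lemma a_shift_rational_identity:
  fixes a b c d q Q r :: complex
  assumes "a \<noteq> 0" "q \<noteq> 0" "Q \<noteq> 0" "1 - q*r \<noteq> 0"
    "1 - a*b*Q \<noteq> 0" "1 - a*c*Q \<noteq> 0" "1 - a*d*Q \<noteq> 0"
    "1 - a*b*c*d*Q*Q \<noteq> 0" "1 - a*b*c*d*Q*Q/q \<noteq> 0"
  shows "Q * q * (1 - inverse (q*Q)) * (1 - a*b*c*d*Q*r) / (2*a*(1 - q*r)*(1 - a*b*c*d*Q*Q))
     + - ((1 - a*b*Q)*(1 - a*c*Q)*(1 - a*d*Q)*(1 - a*b*c*d*Q/q)) / (2*a*(1 - a*b*c*d*Q*Q/q)*(1 - a*b*c*d*Q*Q))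
       * (Q * q * (1 - inverse Q * r) * (1 - a*b*c*d*Q*Q/q) / ((1 - q*r)*(1 - a*b*Q)*(1 - a*c*Q)*(1 - a*d*Q)))
   = - 1/(2*a)"
  using assms by (simp add: divide_simps) algebra

lemma b_shift_rational_identity_0:
  fixes a b c d q Q :: complex
  assumes "a \<noteq> 0" "b \<noteq> 0" "q \<noteq> 0" "1 - a*b*Q \<noteq> 0"
    "1 - a*b*c*d*Q/q \<noteq> 0" "1 - a*b*c*d*Q*Q \<noteq> 0" "1 - a*b*c*d*Q*Q/q \<noteq> 0"
  shows "(1 - a*b) * (1 - a*c*Q) * (1 - a*d*Q) / (2*a * (1 - a*b*c*d*Q*Q))
     + - ((1 - a*b*Q)*(1 - b*c*Q)*(1 - b*d*Q)*(1 - a*b*c*d*Q/q)) / (2*b*(1 - a*b*c*d*Q*Q/q)*(1 - a*b*c*d*Q*Q))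
       * ((1 - a*b) * (1 - a*b*c*d*Q*Q/q) / ((1 - a*b*Q) * (1 - a*b*c*d*Q/q)))
   = (a + inverse a)/2 - (inverse b + b)/2"
  using assms by (simp add: divide_simps) algebra

lemma b_shift_rational_identity:
  fixes a b c d q Q r :: complex
  assumes "a \<noteq> 0" "b \<noteq> 0" "q \<noteq> 0" "Q \<noteq> 0" "r \<noteq> 0"
    "1 - q*r \<noteq> 0" "1 - a*c*r \<noteq> 0" "1 - a*d*r \<noteq> 0" "1 - a*b*Q \<noteq> 0"
    "1 - a*b*c*d*Q*Q \<noteq> 0" "1 - a*b*c*d*Q*Q/q \<noteq> 0" "1 - a*b*q*r \<noteq> 0"
  shows "q * (1 - inverse (q*Q)) * (1 - a*b*c*d*Q*r) * (1 - a*c*Q) * (1 - a*d*Q)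
           / (2*a*(1 - q*r)*(1 - a*b*c*d*Q*Q)*(1 - a*c*r)*(1 - a*d*r))
     + - ((1 - a*b*Q)*(1 - b*c*Q)*(1 - b*d*Q)*(1 - a*b*c*d*Q/q)) / (2*b*(1 - a*b*c*d*Q*Q/q)*(1 - a*b*c*d*Q*Q))
       * (q * (1 - inverse Q * r) * (1 - a*b*c*d*Q*Q/q) / ((1 - q*r)*(1 - a*b*Q)*(1 - a*c*r)*(1 - a*d*r)))
   = - 1/(2*a*r) + ((a*(q*r) + inverse (a*(q*r)))/2 - (inverse b + b)/2)
       * (q * (1 - inverse Q * r) * (1 - a*b*c*d*Q*r) / ((1 - q*r)*(1 - a*b*q*r)*(1 - a*c*r)*(1 - a*d*r)))"
proof -
  define M where "M = 2*a*b*q*r*Q*(1 - q*r)*(1 - a*c*r)*(1 - a*d*r)*(1 - a*b*c*d*Q*Q)"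
  have "q * (1 - inverse (q*Q)) * (1 - a*b*c*d*Q*r) * (1 - a*c*Q) * (1 - a*d*Q)
           / (2*a*(1 - q*r)*(1 - a*b*c*d*Q*Q)*(1 - a*c*r)*(1 - a*d*r))
      = b*q*r*(q*Q - 1)*(1 - a*b*c*d*Q*r)*(1 - a*c*Q)*(1 - a*d*Q) / M"
    unfolding M_def using assms by (simp add: divide_simps)
  moreover have "- ((1 - a*b*Q)*(1 - b*c*Q)*(1 - b*d*Q)*(1 - a*b*c*d*Q/q)) / (2*b*(1 - a*b*c*d*Q*Q/q)*(1 - a*b*c*d*Q*Q))
       * (q * (1 - inverse Q * r) * (1 - a*b*c*d*Q*Q/q) / ((1 - q*r)*(1 - a*b*Q)*(1 - a*c*r)*(1 - a*d*r)))
      = - (a*q*r*(1 - b*c*Q)*(1 - b*d*Q)*(q - a*b*c*d*Q)*(Q - r)) / M"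
    unfolding M_def using assms by (simp add: divide_simps)
  moreover have "- 1/(2*a*r) = - (b*q*Q*(1 - q*r)*(1 - a*c*r)*(1 - a*d*r)*(1 - a*b*c*d*Q*Q)) / M"
    unfolding M_def using assms by (simp add: divide_simps)
  moreover have "((a*(q*r) + inverse (a*(q*r)))/2 - (inverse b + b)/2)
       * (q * (1 - inverse Q * r) * (1 - a*b*c*d*Q*r) / ((1 - q*r)*(1 - a*b*q*r)*(1 - a*c*r)*(1 - a*d*r)))
      = q*(1 - a*b*c*d*Q*Q)*(b - a*q*r)*(Q - r)*(1 - a*b*c*d*Q*r) / M"
  proof -
    have "(a*(q*r) + inverse (a*(q*r)))/2 - (inverse b + b)/2 = (b - a*q*r) * (1 - a*b*q*r) / (2*a*b*q*r)"
      using assms by (simp add: field_simps)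
    then show ?thesis
      unfolding M_def using assms by (simp add: divide_simps)
  qed
  moreover have "b*q*r*(q*Q - 1)*(1 - a*b*c*d*Q*r)*(1 - a*c*Q)*(1 - a*d*Q)
      + - (a*q*r*(1 - b*c*Q)*(1 - b*d*Q)*(q - a*b*c*d*Q)*(Q - r))
      = - (b*q*Q*(1 - q*r)*(1 - a*c*r)*(1 - a*d*r)*(1 - a*b*c*d*Q*Q))
        + q*(1 - a*b*c*d*Q*Q)*(b - a*q*r)*(Q - r)*(1 - a*b*c*d*Q*r)"
    by algebra
  ultimately show ?thesis by (simp only: add_divide_distrib[symmetric] times_divide_eq_right)
qed

locale aw_nondegenerate =
  fixes n :: nat and a b c d q :: complex
  assumes nonzero: "a \<noteq> 0" "b \<noteq> 0" "q \<noteq> 0"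
    and pair_ab: "j \<le> n \<Longrightarrow> 1 - a*b*q^j \<noteq> 0"
    and pair_ac: "j \<le> n \<Longrightarrow> 1 - a*c*q^j \<noteq> 0"
    and pair_ad: "j \<le> n \<Longrightarrow> 1 - a*d*q^j \<noteq> 0"
    and q_power: "0 < j \<Longrightarrow> j \<le> Suc n \<Longrightarrow> 1 - q^j \<noteq> 0"
    and product: "int n - 1 \<le> m \<Longrightarrow> m \<le> 2 * int n \<Longrightarrow> 1 - a*b*c*d * q powi m \<noteq> 0"
begin

lemma pair_base: "1 - a*b \<noteq> 0" "1 - a*c \<noteq> 0" "1 - a*d \<noteq> 0"
  using pair_ab[of 0] pair_ac[of 0] pair_ad[of 0] by simp_all

lemma pair_top: "1 - a*b*q^n \<noteq> 0" "1 - a*c*q^n \<noteq> 0" "1 - a*d*q^n \<noteq> 0"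
  using pair_ab pair_ac pair_ad by simp_all

lemma q_power_Suc: "k \<le> n \<Longrightarrow> 1 - q * q^k \<noteq> 0"
  using q_power[of "Suc k"] by simp

lemma product_ends:
  "1 - a*b*c*d*q^n/q \<noteq> 0" "1 - a*b*c*d*q^n*q^n/q \<noteq> 0" "1 - a*b*c*d*q^n*q^n \<noteq> 0"
  using product[of "int n - 1"] product[of "2 * int n - 1"] product[of "2 * int n"]
  by (simp_all add: power_int_pred power_int_double_pred power_int_double nonzero mult.assoc)

lemma product_power_int:
  "a*b*c*d * q powi (int n - 1) = a*b*c*d*q^n/q"
  "a*b*c*d * q powi (int (Suc n) - 1) = a*b*c*d*q^n"
  "a*q*b*c*d * q powi (int n - 1) = a*b*c*d*q^n"
  "a*(b*q)*c*d * q powi (int n - 1) = a*b*c*d*q^n"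
  using nonzero by (simp_all add: power_int_pred mult_ac)

lemma qpoch_product_shift_eq:
  "qpoch (a*b*c*d*q^n/q) q n
     = (1 - a*b*c*d*q^n/q) * qpoch (a*b*c*d*q^n) q n / (1 - a*b*c*d*q^n*q^n/q)"
proof -
  have "a*b*c*d*q^n/q*q = a*b*c*d*q^n" "a*b*c*d*q^n/q*q^n = a*b*c*d*q^n*q^n/q"
    using nonzero by simp_all
  then show ?thesis
    using qpoch_shift_eq[where x="a*b*c*d*q^n/q" and q=q and m=n] product_ends(2) by simp
qed

lemma qpoch_product_Suc_div:
  "qpoch (a*b*c*d*q^n/q) q (Suc k) / qpoch (a*b*c*d*q^n/q) q n
     = qpoch (a*b*c*d*q^n) q k / qpoch (a*b*c*d*q^n) q n * (1 - a*b*c*d*q^n*q^n/q)"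
proof -
  have "a*b*c*d*q^n/q*q = a*b*c*d*q^n" "a*b*c*d*q^n/q*q^n = a*b*c*d*q^n*q^n/q"
    using nonzero by simp_all
  then show ?thesis
    using qpoch_Suc_div[where x="a*b*c*d*q^n/q" and q=q and m=n and k=k] product_ends(1,2) by simp
qed

lemma aw_coeff_Suc_Suc_a_shift:
  "aw_coeff (Suc n) a b c d q (Suc k) = aw_coeff n (a*q) b c d q k
    * (q^n * q * (1 - inverse (q^Suc n)) * (1 - a*b*c*d*q^n*q^k)
       / (2*a*(1 - q*q^k) * (1 - a*b*c*d*q^n*q^n)))"
proof -
  have shift: "qpoch (a*e) q (Suc n) / qpoch (a*e) q (Suc k) = qpoch (a*q*e) q n / qpoch (a*q*e) q k"
    if "1 - a*e \<noteq> 0" for e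
    using qpoch_Suc_div_Suc[OF that] by (simp add: mult_ac)
  have "q^n \<noteq> 0" using nonzero by simp
  then show ?thesis
    unfolding aw_coeff_def product_power_int qpoch_inverse_power_Suc[OF nonzero(3)]
      shift[OF pair_base(1)] shift[OF pair_base(2)] shift[OF pair_base(3)]
      qpoch_Suc[of "a*b*c*d*q^n" q] qpoch_Suc[of q q]
    unfolding power_Suc divide_inverse inverse_mult_distrib power_mult_distrib power_inverse
    by (rule eq_via_inverse_factor) (simp only: mult_ac)
qed

lemma aw_coeff_Suc_a_shift:
  "aw_coeff n a b c d q (Suc k) = aw_coeff n (a*q) b c d q k
    * (q^n * q * (1 - inverse (q^n) * q^k) * (1 - a*b*c*d*q^n*q^n/q)
       / ((1 - q*q^k) * (1 - a*b*q^n) * (1 - a*c*q^n) * (1 - a*d*q^n)))"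
proof -
  have shift: "qpoch (a*e) q n / qpoch (a*e) q (Suc k) = qpoch (a*q*e) q n / qpoch (a*q*e) q k / (1 - a*e*q^n)"
    if "1 - a*e \<noteq> 0" "1 - a*e*q^n \<noteq> 0" for e
    using qpoch_div_Suc[OF that] by (simp add: mult_ac)
  have "q^n \<noteq> 0" using nonzero by simp
  then show ?thesis
    unfolding aw_coeff_def product_power_int qpoch_product_Suc_div qpoch_Suc[of "inverse (q^n)" q] qpoch_Suc[of q q]
      shift[OF pair_base(1) pair_top(1)] shift[OF pair_base(2) pair_top(2)] shift[OF pair_base(3) pair_top(3)]
    unfolding power_Suc divide_inverse inverse_mult_distrib power_mult_distrib power_inverse
    by (rule eq_via_inverse_factor) (simp only: mult_ac)
qed

lemma aw_coeff_Suc_0: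
  "aw_coeff (Suc n) a b c d q 0 = aw_coeff n a b c d q 0
    * ((1 - a*b*q^n) * (1 - a*c*q^n) * (1 - a*d*q^n) * (1 - a*b*c*d*q^n/q)
       / (2*a * (1 - a*b*c*d*q^n*q^n/q) * (1 - a*b*c*d*q^n*q^n)))"
  unfolding aw_coeff_def product_power_int qpoch_product_shift_eq qpoch_Suc[of _ q n] power_0 qpoch_0
  unfolding power_Suc divide_inverse inverse_mult_distrib inverse_inverse_eq
  by (rule eq_via_inverse_factor[OF product_ends(1)[unfolded divide_inverse]],
      rule eq_via_inverse_factor[OF product_ends(2)[unfolded divide_inverse]])
    (simp only: mult_ac mult_1_left mult_1_right inverse_1)

lemma aw_coeff_Suc_Suc_b_shift:
  "aw_coeff (Suc n) a b c d q (Suc k) = aw_coeff n a (b*q) c d q k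
    * (q * (1 - inverse (q^Suc n)) * (1 - a*b*c*d*q^n*q^k) * (1 - a*c*q^n) * (1 - a*d*q^n)
       / (2*a * (1 - q*q^k) * (1 - a*b*c*d*q^n*q^n) * (1 - a*c*q^k) * (1 - a*d*q^k)))"
proof -
  have shift: "qpoch (a*b) q (Suc n) / qpoch (a*b) q (Suc k) = qpoch (a*(b*q)) q n / qpoch (a*(b*q)) q k"
    using qpoch_Suc_div_Suc[OF pair_base(1)] by (simp add: mult_ac)
  show ?thesis
    unfolding aw_coeff_def product_power_int qpoch_inverse_power_Suc[OF nonzero(3)] shift
      qpoch_Suc[of "a*b*c*d*q^n" q] qpoch_Suc[of q q] qpoch_Suc[of "a*c" q] qpoch_Suc[of "a*d" q]
    unfolding power_Suc divide_inverse inverse_mult_distrib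
    by (simp only: mult_ac)
qed

lemma aw_coeff_Suc_b_shift:
  "aw_coeff n a b c d q (Suc k) = aw_coeff n a (b*q) c d q k
    * (q * (1 - inverse (q^n) * q^k) * (1 - a*b*c*d*q^n*q^n/q)
       / ((1 - q*q^k) * (1 - a*b*q^n) * (1 - a*c*q^k) * (1 - a*d*q^k)))"
proof -
  have shift: "qpoch (a*b) q n / qpoch (a*b) q (Suc k) = qpoch (a*(b*q)) q n / qpoch (a*(b*q)) q k / (1 - a*b*q^n)"
    using qpoch_div_Suc[OF pair_base(1) pair_top(1)] by (simp add: mult_ac)
  show ?thesis
    unfolding aw_coeff_def product_power_int qpoch_product_Suc_div shift qpoch_Suc[of "inverse (q^n)" q] qpoch_Suc[of q q]
      qpoch_Suc[of "a*c" q k] qpoch_Suc[of "a*d" q k]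
    unfolding power_Suc divide_inverse inverse_mult_distrib
    by (simp only: mult_ac)
qed

lemma aw_coeff_Suc_0_b_shift:
  "aw_coeff (Suc n) a b c d q 0 = aw_coeff n a (b*q) c d q 0
    * ((1 - a*b) * (1 - a*c*q^n) * (1 - a*d*q^n) / (2*a * (1 - a*b*c*d*q^n*q^n)))"
proof -
  have shift: "qpoch (a*b) q (Suc n) = (1 - a*b) * qpoch (a*(b*q)) q n"
    by (simp add: qpoch_Suc_shift mult_ac)
  show ?thesis
    unfolding aw_coeff_def product_power_int shift qpoch_Suc[of "a*c" q n] qpoch_Suc[of "a*d" q n]
      qpoch_Suc[of "a*b*c*d*q^n" q n] power_0 qpoch_0
    unfolding power_Suc divide_inverse inverse_mult_distrib
    by (simp only: mult_ac mult_1_left mult_1_right inverse_1)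
qed

lemma aw_coeff_0_b_shift:
  "aw_coeff n a b c d q 0 = aw_coeff n a (b*q) c d q 0
    * ((1 - a*b) * (1 - a*b*c*d*q^n*q^n/q) / ((1 - a*b*q^n) * (1 - a*b*c*d*q^n/q)))"
proof -
  have shift: "qpoch (a*b) q n = (1 - a*b) * qpoch (a*(b*q)) q n / (1 - a*b*q^n)"
    using qpoch_shift_eq[OF pair_top(1)] by (simp add: mult_ac)
  show ?thesis
    unfolding aw_coeff_def product_power_int shift qpoch_product_shift_eq power_0 qpoch_0
    unfolding divide_inverse inverse_mult_distrib inverse_inverse_eq
    by (simp only: mult_ac mult_1_left mult_1_right inverse_1)
qed

lemma aw_k_b_eq:
  "aw_k n b a c d q = - ((1 - a*b*q^n) * (1 - b*c*q^n) * (1 - b*d*q^n) * (1 - a*b*c*d*q^n/q))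
     / (2 * b * (1 - a*b*c*d*q^n*q^n/q) * (1 - a*b*c*d*q^n*q^n))"
  unfolding aw_k_eq[OF nonzero(3)] by (simp add: mult_ac)

lemma aw_coeff_a_relation_0:
  "aw_coeff (Suc n) a b c d q 0 + aw_k n a b c d q * aw_coeff n a b c d q 0 = 0"
proof -
  have "aw_coeff (Suc n) a b c d q 0 = - aw_k n a b c d q * aw_coeff n a b c d q 0"
    unfolding aw_coeff_Suc_0 aw_k_eq[OF nonzero(3)] by (simp add: mult.commute)
  then show ?thesis by simp
qed

lemma aw_coeff_a_relation_Suc:
  assumes "k \<le> n"
  shows "aw_coeff (Suc n) a b c d q (Suc k) + aw_k n a b c d q * aw_coeff n a b c d q (Suc k)
    = - aw_coeff n (a*q) b c d q k / (2*a)"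
proof -
  have "aw_coeff (Suc n) a b c d q (Suc k) + aw_k n a b c d q * aw_coeff n a b c d q (Suc k)
      = aw_coeff n (a*q) b c d q k * (- 1 / (2*a))"
    unfolding aw_coeff_Suc_Suc_a_shift aw_coeff_Suc_a_shift aw_k_eq[OF nonzero(3)] power_Suc
    by (rule scaled_sum_eq, rule a_shift_rational_identity)
      (use nonzero pair_top product_ends q_power_Suc[OF assms] in simp_all)
  then show ?thesis by simp
qed

lemma aw_coeff_b_relation_0:
  "aw_coeff (Suc n) a b c d q 0 + aw_k n b a c d q * aw_coeff n a b c d q 0
    = ((a * q^0 + inverse (a * q^0)) / 2 - (inverse b + b) / 2) * aw_coeff n a (b*q) c d q 0"
proof -
  have "aw_coeff (Suc n) a b c d q 0 + aw_k n b a c d q * aw_coeff n a b c d q 0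
      = aw_coeff n a (b*q) c d q 0 * ((a + inverse a) / 2 - (inverse b + b) / 2)"
    unfolding aw_coeff_Suc_0_b_shift aw_coeff_0_b_shift aw_k_b_eq
    by (rule scaled_sum_eq, rule b_shift_rational_identity_0)
      (use nonzero pair_top product_ends in simp_all)
  then show ?thesis by (simp add: mult.commute)
qed

lemma aw_coeff_b_relation_Suc:
  assumes "k \<le> n"
  shows "aw_coeff (Suc n) a b c d q (Suc k) + aw_k n b a c d q * aw_coeff n a b c d q (Suc k)
    = - aw_coeff n a (b*q) c d q k / (2 * a * q^k)
      + ((a * q^Suc k + inverse (a * q^Suc k)) / 2 - (inverse b + b) / 2) * aw_coeff n a (b*q) c d q (Suc k)"
proof (cases "k = n")
  case True
  have "aw_coeff (Suc n) a b c d q (Suc n) = aw_coeff n a (b*q) c d q n * (- 1 / (2 * a * q^n))"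
    unfolding aw_coeff_Suc_Suc_b_shift
    using nonzero q_power_Suc[of n] pair_top(2,3) product_ends(3) by (simp add: divide_simps) algebra
  with True show ?thesis by (simp add: aw_coeff_beyond_degree nonzero)
next
  case False
  with assms have abqr: "1 - a*b*q*q^k \<noteq> 0" using pair_ab[of "Suc k"] by (simp add: mult.assoc)
  have "aw_coeff (Suc n) a b c d q (Suc k) + aw_k n b a c d q * aw_coeff n a b c d q (Suc k)
      = aw_coeff n a (b*q) c d q k * (- 1 / (2 * a * q^k)
        + ((a * (q * q^k) + inverse (a * (q * q^k))) / 2 - (inverse b + b) / 2)
          * (q * (1 - inverse (q^n) * q^k) * (1 - a*b*c*d*q^n*q^k)
             / ((1 - q*q^k) * (1 - a*b*q*q^k) * (1 - a*c*q^k) * (1 - a*d*q^k))))"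
    unfolding aw_coeff_Suc_Suc_b_shift aw_coeff_Suc_b_shift aw_k_b_eq power_Suc
    by (rule scaled_sum_eq, rule b_shift_rational_identity)
      (use nonzero pair_top product_ends q_power_Suc[OF assms] pair_ac[OF assms] pair_ad[OF assms] abqr
        in simp_all)
  then show ?thesis
    unfolding aw_coeff_Suc[of n a "b*q" c d q k] product_power_int power_Suc
    by (simp only: distrib_left times_divide_eq_right mult_minus_right mult_1_right mult.assoc mult.left_commute)
qed

lemma aw_P_a_shift_recurrence:
  "(cos \<theta> - (inverse a + a) / 2) * aw_P n (a*q) b c d q \<theta>
     = aw_P (Suc n) a b c d q \<theta> + aw_k n a b c d q * aw_P n a b c d q \<theta>"
proof -
  have summand: "(cos \<theta> - (inverse a + a) / 2) * (C * aw_basis (a*q) q \<theta> j)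
      = - C / (2*a) * aw_basis a q \<theta> (Suc j)" for C j
  proof -
    have "(cos \<theta> - (inverse a + a) / 2) * (C * aw_basis (a*q) q \<theta> j)
        = C * ((cos \<theta> - (inverse a + a) / 2) * aw_basis (a*q) q \<theta> j)"
      by (rule mult.left_commute)
    also have "\<dots> = - C / (2*a) * aw_basis a q \<theta> (Suc j)"
      unfolding shifted_cos_mult_aw_basis[OF nonzero(1)] by simp
    finally show ?thesis .
  qed
  have "aw_P (Suc n) a b c d q \<theta> + aw_k n a b c d q * aw_P n a b c d q \<theta>
      = (\<Sum>j\<le>n. - aw_coeff n (a*q) b c d q j / (2*a) * aw_basis a q \<theta> (Suc j))"
    unfolding aw_P_Suc_add_mult[OF nonzero(3)] aw_coeff_a_relation_0
    by (auto intro!: sum.cong simp: aw_coeff_a_relation_Suc)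
  then show ?thesis
    unfolding aw_P_expansion[of n "a*q"] sum_distrib_left summand by simp
qed

lemma aw_P_b_shift_recurrence:
  "(cos \<theta> - (inverse b + b) / 2) * aw_P n a (b*q) c d q \<theta>
     = aw_P (Suc n) a b c d q \<theta> + aw_k n b a c d q * aw_P n a b c d q \<theta>"
proof -
  define C where "C = aw_coeff n a (b*q) c d q"
  define \<phi> where "\<phi> = aw_basis a q \<theta>"
  define g where "g j = (a * q^j + inverse (a * q^j)) / 2 - (inverse b + b) / 2" for j
  have summand: "(cos \<theta> - (inverse b + b) / 2) * (C j * \<phi> j)
      = - C j / (2 * a * q^j) * \<phi> (Suc j) + g j * C j * \<phi> j" for j
  proof -
    have "(cos \<theta> - (inverse b + b) / 2) * (C j * \<phi> j)
        = C j * (cos \<theta> * \<phi> j) - (inverse b + b) / 2 * C j * \<phi> j"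
      by (simp add: algebra_simps)
    then show ?thesis
      unfolding \<phi>_def cos_mult_aw_basis[OF nonzero(1,3)] g_def by (simp add: algebra_simps)
  qed
  have shift: "(\<Sum>j\<le>n. g j * C j * \<phi> j) = g 0 * C 0 * \<phi> 0 + (\<Sum>j\<le>n. g (Suc j) * C (Suc j) * \<phi> (Suc j))"
  proof -
    have "(\<Sum>j\<le>n. g j * C j * \<phi> j) = (\<Sum>j\<le>Suc n. g j * C j * \<phi> j)"
      unfolding C_def by (simp add: aw_coeff_beyond_degree[OF nonzero(3)])
    then show ?thesis by (simp only: sum.atMost_Suc_shift)
  qed
  have "aw_P (Suc n) a b c d q \<theta> + aw_k n b a c d q * aw_P n a b c d q \<theta>
      = g 0 * C 0 * \<phi> 0 + (\<Sum>j\<le>n. (- C j / (2 * a * q^j) + g (Suc j) * C (Suc j)) * \<phi> (Suc j))"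
    unfolding aw_P_Suc_add_mult[OF nonzero(3)] aw_coeff_b_relation_0 C_def \<phi>_def g_def
    by (auto intro!: sum.cong simp: aw_coeff_b_relation_Suc)
  also have "\<dots> = (\<Sum>j\<le>n. - C j / (2 * a * q^j) * \<phi> (Suc j)) + (\<Sum>j\<le>n. g j * C j * \<phi> j)"
    unfolding shift distrib_right sum.distrib by (simp only: add_ac)
  also have "\<dots> = (cos \<theta> - (inverse b + b) / 2) * aw_P n a (b*q) c d q \<theta>"
    unfolding aw_P_expansion[of n a "b*q"] sum_distrib_left C_def[symmetric] \<phi>_def[symmetric] summand
    by (simp only: sum.distrib)
  finally show ?thesis ..
qed

end

theorem lemma4p1:
  fixes a b c d q \<theta> :: complex and n :: nat
  assumes nz: "a \<noteq> 0" "b \<noteq> 0" "c \<noteq> 0" "d \<noteq> 0" "q \<noteq> 0"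
    and gen_pair: "\<forall>j\<le>n. \<forall>u\<in>{a*b, a*c, a*d, b*c, b*d, c*d}. 1 - u * q ^ j \<noteq> 0"
    and gen_q: "\<forall>j\<in>{1..n+1}. 1 - q ^ j \<noteq> 0"
    and gen_abcd: "\<forall>m::int. int n - 1 \<le> m \<and> m \<le> 2 * int n \<longrightarrow> 1 - a*b*c*d * q powi m \<noteq> 0"
  defines "x \<equiv> cos \<theta>"
  shows "(x - (inverse a + a) / 2) * aw_P n (a*q) b c d q \<theta>
           = aw_P (n+1) a b c d q \<theta> + aw_k n a b c d q * aw_P n a b c d q \<theta>
      \<and> (x - (inverse b + b) / 2) * aw_P n a (b*q) c d q \<theta>
           = aw_P (n+1) a b c d q \<theta> + aw_k n b a c d q * aw_P n a b c d q \<theta>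
      \<and> (x - (inverse c + c) / 2) * aw_P n a b (c*q) d q \<theta>
           = aw_P (n+1) a b c d q \<theta> + aw_k n c b a d q * aw_P n a b c d q \<theta>
      \<and> (x - (inverse d + d) / 2) * aw_P n a b c (d*q) q \<theta>
           = aw_P (n+1) a b c d q \<theta> + aw_k n d b c a q * aw_P n a b c d q \<theta>"
proof -
  have q_power: "0 < j \<Longrightarrow> j \<le> Suc n \<Longrightarrow> 1 - q^j \<noteq> 0" for j
    using gen_q by auto
  interpret abcd: aw_nondegenerate n a b c d q
    using nz gen_pair q_power gen_abcd by unfold_locales auto
  interpret acbd: aw_nondegenerate n a c b d q
    using nz gen_pair q_power gen_abcd by unfold_locales (auto simp: mult_ac)
  interpret adcb: aw_nondegenerate n a d c b q
    using nz gen_pair q_power gen_abcd by unfold_locales (auto simp: mult_ac)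
  have "(x - (inverse c + c) / 2) * aw_P n a b (c*q) d q \<theta>
      = aw_P (Suc n) a b c d q \<theta> + aw_k n c b a d q * aw_P n a b c d q \<theta>"
    using acbd.aw_P_b_shift_recurrence[of \<theta>] unfolding x_def
    by (simp only: aw_P_commute_bc[of _ a b] aw_k_commute_bc[of n c a b])
  moreover have "(x - (inverse d + d) / 2) * aw_P n a b c (d*q) q \<theta>
      = aw_P (Suc n) a b c d q \<theta> + aw_k n d b c a q * aw_P n a b c d q \<theta>"
    using adcb.aw_P_b_shift_recurrence[of \<theta>] unfolding x_def
    by (simp only: aw_P_commute_bd[of _ a b] aw_k_commute_bd[of n d a])
  ultimately show ?thesis
    unfolding x_def Suc_eq_plus1[symmetric]
    using abcd.aw_P_a_shift_recurrence abcd.aw_P_b_shift_recurrence by blast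
qed

end
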